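(* Let $0<\gamma_0\le\gamma_1$, $0<\eta\le1/\gamma_1$, let $\Sigma$ be symmetric positive definite with $\gamma_0I\preceq\Sigma^{-1}\preceq\gamma_1I$, and let $S$ be symmetric with $\gamma_0I\preceq S\preceq\gamma_1I$. Define $\Sigma'=(I-\eta S)\Sigma(I-\eta S)$ and $\Sigma''=\frac12\big(\Sigma'+2\eta I+[\Sigma'(\Sigma'+4\eta I)]^{1/2}\big)$. Then $$\gamma_1^{-1}I\preceq\Sigma''\preceq\gamma_0^{-1}I.$$ (Thus, at iteration $k$ of FB--GVI or Stochastic FB--GVI, if $\gamma_0I\preceq\Sigma_k^{-1}\preceq\gamma_1I$ and $\gamma_0I\preceq S_k\preceq\gamma_1I$, then $\gamma_1^{-1}I\preceq\Sigma_{k+1}\preceq\gamma_0^{-1}I$.)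
   Context: $[\cdot]^{1/2}$ is the principal positive semidefinite square root; $\Sigma'$ and $\Sigma'+4\eta I$ commute so their product is positive semidefinite. In FB--GVI/Stochastic FB--GVI the covariance update is $\Sigma_{k+1/2}=(I-\eta S_k)\Sigma_k(I-\eta S_k)$, $\Sigma_{k+1}=\frac12\big(\Sigma_{k+1/2}+2\eta I+[\Sigma_{k+1/2}(\Sigma_{k+1/2}+4\eta I)]^{1/2}\big)$, where $S_k=\mathbb E_{p_k}\nabla^2V$ (deterministic) or $S_k=\nabla^2V(\hat X_k)$ with $\hat X_k\sim p_k$ (stochastic). *)

theory Defs
  imports "HOL-Analysis.Analysis"
begin

definition sym_mat :: "real^'n^'n \<Rightarrow> bool" where
  "sym_mat A \<longleftrightarrow> transpose A = A"

definition psd_mat :: "real^'n^'n \<Rightarrow> bool" where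
  "psd_mat A \<longleftrightarrow> sym_mat A \<and> (\<forall>x. 0 \<le> x \<bullet> (A *v x))"

definition pd_mat :: "real^'n^'n \<Rightarrow> bool" where
  "pd_mat A \<longleftrightarrow> sym_mat A \<and> (\<forall>x. x \<noteq> 0 \<longrightarrow> 0 < x \<bullet> (A *v x))"

definition loewner_le :: "real^'n^'n \<Rightarrow> real^'n^'n \<Rightarrow> bool" where
  "loewner_le A B \<longleftrightarrow> psd_mat (B - A)"

definition psd_sqrt :: "real^'n^'n \<Rightarrow> real^'n^'n" where
  "psd_sqrt A = (THE B. psd_mat B \<and> B ** B = A)"

end

theory Submission
  imports Defs
begin

text \<open>\<open>\<Sigma>\<close> has spectrum in \<open>[1/\<gamma>\<^sub>1, 1/\<gamma>\<^sub>0]\<close> and \<open>I - \<eta>S\<close> has spectrum in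
  \<open>[1 - \<eta>\<gamma>\<^sub>1, 1 - \<eta>\<gamma>\<^sub>0] \<subseteq> [0, 1]\<close>, so the quadratic form of \<open>\<Sigma>'\<close> squeezes it between
  \<open>(1 - \<eta>\<gamma>\<^sub>1)\<^sup>2/\<gamma>\<^sub>1\<close> and \<open>(1 - \<eta>\<gamma>\<^sub>0)\<^sup>2/\<gamma>\<^sub>0\<close> in the Loewner order.
  \<open>\<Sigma>''\<close> arises from \<open>\<Sigma>'\<close> by applying to each eigenvalue the increasing map
  \<open>f l = (l + 2\<eta> + sqrt (l (l + 4\<eta>)))/2\<close>, which inverts \<open>\<sigma> \<mapsto> (\<sigma> - \<eta>)\<^sup>2/\<sigma>\<close> on \<open>[\<eta>, \<infinity>)\<close>;
  as \<open>\<eta> \<le> 1/\<gamma>\<^sub>1 \<le> 1/\<gamma>\<^sub>0\<close>, it sends the two bounds exactly to \<open>1/\<gamma>\<^sub>1\<close> and \<open>1/\<gamma>\<^sub>0\<close>.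
  Passing between matrices and their eigenvalues rests on the spectral theorem for real symmetric
  matrices, obtained by maximising the Rayleigh quotient on invariant subspaces.\<close>

lemma mat_mult_vec: "mat c *v x = c *\<^sub>R (x::real^'n)"
  by (simp add: vec_eq_iff matrix_vector_mult_def mat_def if_distribR if_distrib[of "\<lambda>z. z * _"] cong: if_cong)

lemma sym_mat_inner_swap: "sym_mat A \<Longrightarrow> x \<bullet> (A *v y) = (A *v x) \<bullet> y"
  by (metis sym_mat_def dot_lmul_matrix transpose_matrix_vector)

lemma sym_matI:
  assumes "\<And>x y. x \<bullet> (A *v y) = (A *v x) \<bullet> (y::real^'n)"
  shows "sym_mat A"
  unfolding sym_mat_def matrix_eq
proof
  fix y
  have "x \<bullet> (transpose A *v y) = x \<bullet> (A *v y)" for x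
  proof -
    have "x \<bullet> (transpose A *v y) = (transpose A *v y) \<bullet> x" by (rule inner_commute)
    also have "\<dots> = (y v* A) \<bullet> x" by (simp only: transpose_matrix_vector)
    also have "\<dots> = y \<bullet> (A *v x)" by (rule dot_lmul_matrix)
    also have "\<dots> = (A *v x) \<bullet> y" by (rule inner_commute)
    finally show ?thesis by (simp only: assms)
  qed
  thus "transpose A *v y = A *v y"
    using vector_eq_ldot by blast
qed

lemma transpose_diff: "transpose (A - B) = transpose A - transpose (B :: real^'n^'n)"
  by (simp add: transpose_def vec_eq_iff)

lemma sym_mat_sandwich:
  assumes "sym_mat P" "sym_mat M" shows "sym_mat (P ** M ** P :: real^'n^'n)"
  using assms by (simp add: sym_mat_def matrix_transpose_mul matrix_mul_assoc)

lemma loewner_le_mat_left_iff: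
  "loewner_le (mat c) A \<longleftrightarrow> sym_mat A \<and> (\<forall>x. c * (x \<bullet> x) \<le> x \<bullet> (A *v x))"
  by (auto simp: loewner_le_def psd_mat_def sym_mat_def transpose_diff matrix_vector_mult_diff_rdistrib
      mat_mult_vec inner_diff_right)

lemma loewner_le_mat_right_iff:
  "loewner_le A (mat c) \<longleftrightarrow> sym_mat A \<and> (\<forall>x. x \<bullet> (A *v x) \<le> c * (x \<bullet> x))"
  by (auto simp: loewner_le_def psd_mat_def sym_mat_def transpose_diff matrix_vector_mult_diff_rdistrib
      mat_mult_vec inner_diff_right)

lemma psd_mat_iff_loewner_le: "psd_mat A \<longleftrightarrow> loewner_le (mat 0) A"
proof -
  have "mat 0 = (0 :: real^'n^'n)" by (simp add: mat_def vec_eq_iff)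
  thus ?thesis by (simp add: loewner_le_def)
qed

lemma loewner_le_mat_mat_le:
  fixes A :: "real^'n^'n"
  assumes "loewner_le (mat a) A" "loewner_le A (mat b)"
  shows "a \<le> b"
proof -
  define x :: "real^'n" where "x = axis undefined 1"
  have "a * (x \<bullet> x) \<le> x \<bullet> (A *v x)" "x \<bullet> (A *v x) \<le> b * (x \<bullet> x)"
    using assms by (simp_all add: loewner_le_mat_left_iff loewner_le_mat_right_iff)
  moreover have "x \<bullet> x = 1" by (simp add: x_def inner_axis_axis)
  ultimately show ?thesis by simp
qed

section \<open>The spectral theorem\<close>

lemma inner_mult_vec_add_scaleR:
  "(x + t *\<^sub>R y) \<bullet> (A *v (x + t *\<^sub>R y)) =
   x \<bullet> (A *v x) + t * (x \<bullet> (A *v y)) + t * (y \<bullet> (A *v x)) + t\<^sup>2 * (y \<bullet> (A *v (y::real^'n)))"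
  by (simp add: matrix_vector_right_distrib matrix_vector_mult_scaleR inner_add_left inner_add_right
      algebra_simps power2_eq_square)

lemma eq_0_if_le_mult_all_pos:
  fixes a c :: real
  assumes "0 \<le> a" "\<And>t. 0 < t \<Longrightarrow> a \<le> t * c"
  shows "a = 0"
proof (rule ccontr)
  assume "a \<noteq> 0"
  hence a: "0 < a" using assms(1) by simp
  have "a \<le> (a / (\<bar>c\<bar> + 1)) * c" using assms(2)[of "a / (\<bar>c\<bar> + 1)"] a by simp
  also have "\<dots> = a * (c / (\<bar>c\<bar> + 1))" by simp
  also have "\<dots> < a * 1" using a by (intro mult_strict_left_mono) (auto simp: field_simps)
  finally show False by simp
qed

text \<open>A maximiser of the Rayleigh quotient on an invariant subspace is an eigenvector: perturbing
  it by \<open>t\<close> times its residual gains \<open>2t\<close> times the squared residual at first order.\<close>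
lemma sym_mat_rayleigh_max_eigenvector:
  fixes A :: "real^'n^'n"
  assumes sym: "sym_mat A" and U: "subspace U" and inv: "\<And>x. x \<in> U \<Longrightarrow> A *v x \<in> U"
    and w: "w \<in> U" "w \<bullet> w = 1"
    and max: "\<And>y. y \<in> U \<Longrightarrow> y \<bullet> (A *v y) \<le> (w \<bullet> (A *v w)) * (y \<bullet> y)"
  shows "A *v w = (w \<bullet> (A *v w)) *\<^sub>R w"
proof -
  define l where "l = w \<bullet> (A *v w)"
  define r where "r = A *v w - l *\<^sub>R w"
  have r: "r \<in> U" using U inv w(1) by (simp add: r_def subspace_diff subspace_scale)
  have wr: "w \<bullet> r = 0" using w(2) by (simp add: r_def l_def inner_diff_right)
  have rAw: "r \<bullet> (A *v w) = r \<bullet> r"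
    using wr by (simp add: r_def inner_diff_right inner_commute)
  have wAr: "w \<bullet> (A *v r) = r \<bullet> r"
    using sym_mat_inner_swap[OF sym, of w r] rAw by (simp add: inner_commute)
  have "r \<bullet> r = 0"
  proof (rule eq_0_if_le_mult_all_pos)
    fix t :: real
    assume "0 < t"
    have "w + t *\<^sub>R r \<in> U" using U w(1) r by (simp add: subspace_add subspace_scale)
    from max[OF this]
    have "l + 2 * t * (r \<bullet> r) + t\<^sup>2 * (r \<bullet> (A *v r)) \<le> l * (1 + t\<^sup>2 * (r \<bullet> r))"
      unfolding inner_mult_vec_add_scaleR wAr
      using w(2) wr rAw by (simp add: l_def inner_add_left inner_add_right inner_commute power2_eq_square algebra_simps)
    hence "t * (r \<bullet> r) \<le> t * (t * ((l * (r \<bullet> r) - r \<bullet> (A *v r)) / 2))"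
      by (simp add: power2_eq_square algebra_simps)
    thus "r \<bullet> r \<le> t * ((l * (r \<bullet> r) - r \<bullet> (A *v r)) / 2)" using \<open>0 < t\<close> by simp
  qed simp
  thus ?thesis by (simp add: r_def l_def)
qed

lemma sym_mat_invariant_subspace_eigenvector:
  fixes A :: "real^'n^'n"
  assumes sym: "sym_mat A" and U: "subspace U" "U \<noteq> {0}" and inv: "\<And>x. x \<in> U \<Longrightarrow> A *v x \<in> U"
  obtains w where "w \<in> U" "norm w = 1" "A *v w = (w \<bullet> (A *v w)) *\<^sub>R w"
proof -
  define K where "K = sphere 0 1 \<inter> U"
  have "compact K" unfolding K_def using closed_subspace[OF U(1)] by (simp add: compact_Int_closed)
  obtain u where "u \<in> U" "u \<noteq> 0" using U subspace_0 by blast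
  hence "(1 / norm u) *\<^sub>R u \<in> K" using U(1) by (simp add: K_def subspace_scale)
  hence "K \<noteq> {}" by auto
  moreover have "continuous_on K (\<lambda>x. x \<bullet> (A *v x))"
    by (intro continuous_intros linear_continuous_on matrix_vector_mul_bounded_linear)
  ultimately obtain w where wK: "w \<in> K" and wmax: "\<And>y. y \<in> K \<Longrightarrow> y \<bullet> (A *v y) \<le> w \<bullet> (A *v w)"
    using continuous_attains_sup[OF \<open>compact K\<close>] by blast
  have w: "w \<in> U" "norm w = 1" using wK by (auto simp: K_def)
  have "y \<bullet> (A *v y) \<le> (w \<bullet> (A *v w)) * (y \<bullet> y)" if "y \<in> U" for y
  proof (cases "y = 0")
    case False
    have "(1 / norm y) *\<^sub>R y \<in> K" using False that U(1) by (simp add: K_def subspace_scale)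
    from wmax[OF this] have "(y \<bullet> (A *v y)) / (y \<bullet> y) \<le> w \<bullet> (A *v w)"
      by (simp add: matrix_vector_mult_scaleR power2_norm_eq_inner[symmetric] power2_eq_square divide_simps)
    thus ?thesis using False by (simp add: divide_le_eq mult.commute)
  qed simp
  with sym_mat_rayleigh_max_eigenvector[OF sym U(1) inv w(1)] w
  show ?thesis using that by (simp add: norm_eq_1)
qed

lemma sym_mat_orthonormal_eigenvectors:
  fixes A :: "real^'n^'n"
  assumes sym: "sym_mat A"
  shows "k \<le> DIM(real^'n) \<Longrightarrow> \<exists>V. finite V \<and> card V = k \<and> pairwise orthogonal V \<and>
    (\<forall>v\<in>V. norm v = 1 \<and> A *v v = (v \<bullet> (A *v v)) *\<^sub>R v)"
proof (induction k)
  case 0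
  show ?case by (intro exI[of _ "{}"]) auto
next
  case (Suc k)
  then obtain V where V: "finite V" "card V = k" "pairwise orthogonal V"
    and eig: "\<forall>v\<in>V. norm v = 1 \<and> A *v v = (v \<bullet> (A *v v)) *\<^sub>R v" by auto
  define U where "U = {x. \<forall>v\<in>V. orthogonal v x}"
  have U: "subspace U" unfolding U_def by (rule subspace_orthogonal_to_vectors)
  have "dim V < DIM(real^'n)" using dim_le_card'[OF V(1)] V(2) Suc(2) by simp
  then obtain u :: "real^'n" where "u \<noteq> 0" "\<And>y. y \<in> span V \<Longrightarrow> orthogonal u y"
    using orthogonal_to_subspace_exists by metis
  hence "u \<in> U" "u \<noteq> 0" by (auto simp: U_def span_base orthogonal_commute)
  hence "U \<noteq> {0}" by auto
  moreover have "A *v x \<in> U" if "x \<in> U" for x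
  proof -
    have "v \<bullet> (A *v x) = 0" if "v \<in> V" for v
    proof -
      have "v \<bullet> (A *v x) = (A *v v) \<bullet> x" by (rule sym_mat_inner_swap[OF sym])
      also have "\<dots> = (v \<bullet> (A *v v)) * (v \<bullet> x)" using eig \<open>v \<in> V\<close> by (metis inner_scaleR_left)
      finally show ?thesis using \<open>x \<in> U\<close> \<open>v \<in> V\<close> by (simp add: U_def orthogonal_def)
    qed
    thus ?thesis by (simp add: U_def orthogonal_def)
  qed
  ultimately obtain w where w: "w \<in> U" "norm w = 1" "A *v w = (w \<bullet> (A *v w)) *\<^sub>R w"
    using sym_mat_invariant_subspace_eigenvector[OF sym U] by blast
  have "w \<notin> V" using w(1,2) by (auto simp: U_def orthogonal_def)
  show ?case
  proof (intro exI[of _ "insert w V"] conjI)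
    show "finite (insert w V)" "card (insert w V) = Suc k" using V \<open>w \<notin> V\<close> by auto
    show "pairwise orthogonal (insert w V)"
      using V(3) w(1) by (auto simp: pairwise_insert U_def orthogonal_commute)
    show "\<forall>v\<in>insert w V. norm v = 1 \<and> A *v v = (v \<bullet> (A *v v)) *\<^sub>R v" using eig w by simp
  qed
qed

definition onb :: "(real^'n) set \<Rightarrow> bool" where
  "onb V \<longleftrightarrow> finite V \<and> pairwise orthogonal V \<and> (\<forall>v\<in>V. norm v = 1) \<and> span V = UNIV"

definition spectral_mat :: "(real^'n) set \<Rightarrow> (real^'n \<Rightarrow> real) \<Rightarrow> real^'n^'n" where
  "spectral_mat V g = matrix (\<lambda>x. \<Sum>v\<in>V. (g v * (v \<bullet> x)) *\<^sub>R v)"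

lemma onb_expand: "onb V \<Longrightarrow> (\<Sum>v\<in>V. (v \<bullet> x) *\<^sub>R v) = x"
  using orthonormal_basis_expand[of V x] by (simp add: onb_def inner_commute)

lemma onb_inner: "onb V \<Longrightarrow> u \<in> V \<Longrightarrow> v \<in> V \<Longrightarrow> u \<bullet> v = (if u = v then 1 else 0)"
  by (auto simp: onb_def pairwise_def orthogonal_def norm_eq_1)

lemma spectral_mat_mult_vec: "spectral_mat V g *v x = (\<Sum>v\<in>V. (g v * (v \<bullet> x)) *\<^sub>R v)"
proof -
  have "linear (\<lambda>x. \<Sum>v\<in>V. (g v * (v \<bullet> x)) *\<^sub>R v)"
    by (rule linearI) (auto simp: inner_add_right distrib_left scaleR_add_left sum.distrib scaleR_sum_right mult_ac)
  thus ?thesis unfolding spectral_mat_def by (simp add: matrix_vector_mul(2))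
qed

lemma spectral_mat_eigenvector:
  assumes "onb V" "u \<in> V"
  shows "spectral_mat V g *v u = g u *\<^sub>R u"
proof -
  have "spectral_mat V g *v u = (\<Sum>v\<in>V. if v = u then g u *\<^sub>R u else 0)"
    unfolding spectral_mat_mult_vec using assms by (intro sum.cong) (auto simp: onb_inner)
  also have "\<dots> = g u *\<^sub>R u" using assms by (simp add: onb_def)
  finally show ?thesis .
qed

lemma spectral_matI:
  assumes V: "onb V" and eig: "\<And>u. u \<in> V \<Longrightarrow> A *v u = g u *\<^sub>R u"
  shows "A = spectral_mat V g"
  unfolding matrix_eq
proof
  fix x
  have "A *v x = A *v (\<Sum>v\<in>V. (v \<bullet> x) *\<^sub>R v)" by (simp add: onb_expand[OF V])
  also have "\<dots> = (\<Sum>v\<in>V. (v \<bullet> x) *\<^sub>R (A *v v))" by (simp add: vec.sum matrix_vector_mult_scaleR)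
  also have "\<dots> = spectral_mat V g *v x"
    unfolding spectral_mat_mult_vec using eig by (intro sum.cong) (auto simp: mult.commute)
  finally show "A *v x = spectral_mat V g *v x" .
qed

lemma spectral_mat_cong: "(\<And>v. v \<in> V \<Longrightarrow> g v = h v) \<Longrightarrow> spectral_mat V g = spectral_mat V h"
  unfolding spectral_mat_def by (metis (no_types, lifting) sum.cong)

lemma spectral_mat_const: "onb V \<Longrightarrow> spectral_mat V (\<lambda>_. c) = mat c"
  by (rule spectral_matI[symmetric]) (simp_all add: mat_mult_vec)

lemma spectral_mat_add:
  "onb V \<Longrightarrow> spectral_mat V g + spectral_mat V h = spectral_mat V (\<lambda>v. g v + h v)"
  by (rule spectral_matI) (simp_all add: matrix_vector_mult_add_rdistrib spectral_mat_eigenvector scaleR_add_left)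

lemma spectral_mat_scaleR: "onb V \<Longrightarrow> c *\<^sub>R spectral_mat V g = spectral_mat V (\<lambda>v. c * g v)"
  by (rule spectral_matI) (simp_all add: scaleR_matrix_vector_assoc[symmetric] spectral_mat_eigenvector)

lemma spectral_mat_mult:
  "onb V \<Longrightarrow> spectral_mat V g ** spectral_mat V h = spectral_mat V (\<lambda>v. g v * h v)"
  by (rule spectral_matI)
    (auto simp: matrix_vector_mul_assoc[symmetric] spectral_mat_eigenvector matrix_vector_mult_scaleR)

lemma spectral_mat_quadratic: "x \<bullet> (spectral_mat V g *v x) = (\<Sum>v\<in>V. g v * (v \<bullet> x)\<^sup>2)"
  by (simp add: spectral_mat_mult_vec inner_sum_right power2_eq_square mult.assoc inner_commute)

lemma onb_inner_self: "onb V \<Longrightarrow> x \<bullet> x = (\<Sum>v\<in>V. (v \<bullet> x)\<^sup>2)"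
  using spectral_mat_quadratic[of x V "\<lambda>_. 1"] spectral_matI[of V "mat 1" "\<lambda>_. 1"] by simp

lemma sym_mat_spectral_mat: "sym_mat (spectral_mat V g)"
  by (rule sym_matI) (simp add: spectral_mat_mult_vec inner_sum_right inner_sum_left mult_ac inner_commute)

theorem sym_mat_spectral:
  fixes A :: "real^'n^'n"
  assumes sym: "sym_mat A"
  obtains V g where "onb V" "A = spectral_mat V g"
proof -
  obtain V where V: "finite V" "card V = DIM(real^'n)" "pairwise orthogonal V"
    and eig: "\<forall>v\<in>V. norm v = 1 \<and> A *v v = (v \<bullet> (A *v v)) *\<^sub>R v"
    using sym_mat_orthonormal_eigenvectors[OF sym, of "DIM(real^'n)"] by auto
  have "independent V" using V(3) eig pairwise_orthogonal_independent by force
  hence "span V = UNIV" using dim_eq_card_independent V(2) dim_eq_full by metis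
  hence "onb V" using V eig by (simp add: onb_def)
  moreover have "A = spectral_mat V (\<lambda>v. v \<bullet> (A *v v))" using eig by (intro spectral_matI[OF \<open>onb V\<close>]) auto
  ultimately show ?thesis using that by blast
qed

lemma spectral_mat_quadratic_ge:
  assumes "onb V" "\<And>v. v \<in> V \<Longrightarrow> c \<le> g v"
  shows "c * (x \<bullet> x) \<le> x \<bullet> (spectral_mat V g *v x)"
  unfolding onb_inner_self[OF assms(1)] spectral_mat_quadratic sum_distrib_left
  using assms(2) by (intro sum_mono mult_right_mono) auto

lemma spectral_mat_quadratic_le:
  assumes "onb V" "\<And>v. v \<in> V \<Longrightarrow> g v \<le> c"
  shows "x \<bullet> (spectral_mat V g *v x) \<le> c * (x \<bullet> x)"
  unfolding onb_inner_self[OF assms(1)] spectral_mat_quadratic sum_distrib_left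
  using assms(2) by (intro sum_mono mult_right_mono) auto

lemma loewner_le_mat_spectral_mat_iff:
  assumes V: "onb V"
  shows "loewner_le (mat c) (spectral_mat V g) \<longleftrightarrow> (\<forall>v\<in>V. c \<le> g v)"
proof
  assume "loewner_le (mat c) (spectral_mat V g)"
  hence le: "c * (v \<bullet> v) \<le> v \<bullet> (spectral_mat V g *v v)" for v
    by (simp add: loewner_le_mat_left_iff)
  show "\<forall>v\<in>V. c \<le> g v"
  proof
    fix v
    assume v: "v \<in> V"
    from le[of v] show "c \<le> g v" by (simp add: spectral_mat_eigenvector[OF V v] onb_inner[OF V v v])
  qed
next
  assume "\<forall>v\<in>V. c \<le> g v"
  thus "loewner_le (mat c) (spectral_mat V g)"
    using spectral_mat_quadratic_ge[OF V] by (simp add: loewner_le_mat_left_iff sym_mat_spectral_mat)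
qed

lemma loewner_le_spectral_mat_mat_iff:
  assumes V: "onb V"
  shows "loewner_le (spectral_mat V g) (mat c) \<longleftrightarrow> (\<forall>v\<in>V. g v \<le> c)"
proof
  assume "loewner_le (spectral_mat V g) (mat c)"
  hence le: "v \<bullet> (spectral_mat V g *v v) \<le> c * (v \<bullet> v)" for v
    by (simp add: loewner_le_mat_right_iff)
  show "\<forall>v\<in>V. g v \<le> c"
  proof
    fix v
    assume v: "v \<in> V"
    from le[of v] show "g v \<le> c" by (simp add: spectral_mat_eigenvector[OF V v] onb_inner[OF V v v])
  qed
next
  assume "\<forall>v\<in>V. g v \<le> c"
  thus "loewner_le (spectral_mat V g) (mat c)"
    using spectral_mat_quadratic_le[OF V] by (simp add: loewner_le_mat_right_iff sym_mat_spectral_mat)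
qed

lemma psd_mat_spectral_mat_iff: "onb V \<Longrightarrow> psd_mat (spectral_mat V g) \<longleftrightarrow> (\<forall>v\<in>V. 0 \<le> g v)"
  unfolding psd_mat_iff_loewner_le by (rule loewner_le_mat_spectral_mat_iff)

section \<open>Square roots and inverses\<close>

text \<open>If \<open>C\<^sup>2 u = \<beta>\<^sup>2 u\<close> with \<open>\<beta> > 0\<close>, then \<open>r = C u - \<beta> u\<close> satisfies \<open>C r = -\<beta> r\<close>, which
  positivity of \<open>C\<close> rules out unless \<open>r = 0\<close>.\<close>
lemma psd_mat_eigenvector_of_square:
  fixes C :: "real^'n^'n"
  assumes C: "psd_mat C" and "0 \<le> \<beta>" and sq: "(C ** C) *v u = (\<beta> * \<beta>) *\<^sub>R u"
  shows "C *v u = \<beta> *\<^sub>R u"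
proof (cases "\<beta> = 0")
  case True
  have "(C *v u) \<bullet> (C *v u) = u \<bullet> ((C ** C) *v u)"
    using C sym_mat_inner_swap[of C u "C *v u"] by (simp add: psd_mat_def matrix_vector_mul_assoc)
  thus ?thesis using sq True by simp
next
  case False
  define r where "r = C *v u - \<beta> *\<^sub>R u"
  have "C *v r = (- \<beta>) *\<^sub>R r"
    using sq by (simp add: r_def matrix_vector_mult_diff_distrib matrix_vector_mul_assoc
        matrix_vector_mult_scaleR algebra_simps)
  hence "0 \<le> - \<beta> * (r \<bullet> r)" using C by (metis psd_mat_def inner_scaleR_right)
  hence "r \<bullet> r \<le> 0" using False \<open>0 \<le> \<beta>\<close> by (simp add: mult_le_0_iff)
  hence "r = 0" by (metis inner_ge_zero inner_eq_zero_iff order_antisym)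
  thus ?thesis by (simp add: r_def)
qed

lemma psd_mat_square_unique:
  fixes B C :: "real^'n^'n"
  assumes B: "psd_mat B" and C: "psd_mat C" and eq: "B ** B = C ** C"
  shows "B = C"
proof -
  obtain V b where V: "onb V" and B_eq: "B = spectral_mat V b"
    using B sym_mat_spectral unfolding psd_mat_def by blast
  have "C *v u = b u *\<^sub>R u" if u: "u \<in> V" for u
  proof (rule psd_mat_eigenvector_of_square[OF C])
    show "0 \<le> b u" using B u psd_mat_spectral_mat_iff[OF V] B_eq by simp
    show "(C ** C) *v u = (b u * b u) *\<^sub>R u"
      using u by (simp add: eq[symmetric] B_eq spectral_mat_mult[OF V] spectral_mat_eigenvector[OF V])
  qed
  hence "C = spectral_mat V b" by (rule spectral_matI[OF V])
  with B_eq show ?thesis by simp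
qed

lemma psd_sqrt_eq: "psd_mat B \<Longrightarrow> B ** B = A \<Longrightarrow> psd_sqrt A = B"
  unfolding psd_sqrt_def using psd_mat_square_unique by (intro the_equality) auto

lemma matrix_inv_eq:
  fixes A B :: "real^'n^'n"
  assumes "A ** B = mat 1" "B ** A = mat 1"
  shows "matrix_inv A = B"
proof -
  have "\<exists>A'. A ** A' = mat 1 \<and> A' ** A = mat 1" using assms by blast
  hence inv: "matrix_inv A ** A = mat 1" unfolding matrix_inv_def by (rule someI2_ex) blast
  have "matrix_inv A = matrix_inv A ** (A ** B)" by (simp add: assms(1))
  also have "\<dots> = (matrix_inv A ** A) ** B" by (simp add: matrix_mul_assoc)
  finally show ?thesis by (simp add: inv)
qed

lemma pd_mat_loewner_bounds_of_inverse:
  fixes M :: "real^'n^'n"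
  assumes pd: "pd_mat M" and "0 < a"
    and lo: "loewner_le (mat a) (matrix_inv M)" and hi: "loewner_le (matrix_inv M) (mat b)"
  shows "loewner_le (mat (1 / b)) M" "loewner_le M (mat (1 / a))"
proof -
  obtain V g where V: "onb V" and M_eq: "M = spectral_mat V g"
    using pd sym_mat_spectral unfolding pd_mat_def by blast
  have g_pos: "0 < g v" if v: "v \<in> V" for v
  proof -
    have "v \<noteq> 0" using V v by (auto simp: onb_def)
    with pd have "0 < v \<bullet> (M *v v)" by (simp add: pd_mat_def)
    thus ?thesis by (simp add: M_eq spectral_mat_eigenvector[OF V v] onb_inner[OF V v v])
  qed
  have "matrix_inv M = spectral_mat V (\<lambda>v. 1 / g v)"
  proof (rule matrix_inv_eq)
    have "spectral_mat V (\<lambda>v. g v * (1 / g v)) = spectral_mat V (\<lambda>_. 1)"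
      by (intro spectral_mat_cong) (auto dest: g_pos)
    hence "spectral_mat V (\<lambda>v. g v * (1 / g v)) = mat 1" by (simp add: spectral_mat_const[OF V])
    thus "M ** spectral_mat V (\<lambda>v. 1 / g v) = mat 1" "spectral_mat V (\<lambda>v. 1 / g v) ** M = mat 1"
      by (simp_all add: M_eq spectral_mat_mult[OF V] mult.commute)
  qed
  hence "a \<le> inverse (g v)" "inverse (g v) \<le> b" if "v \<in> V" for v
    using lo hi that by (simp_all add: loewner_le_mat_spectral_mat_iff[OF V] loewner_le_spectral_mat_mat_iff[OF V]
        inverse_eq_divide)
  hence "1 / b \<le> g v" "g v \<le> 1 / a" if "v \<in> V" for v
    using le_imp_inverse_le[of "inverse (g v)" b] le_imp_inverse_le[of a "inverse (g v)"] \<open>0 < a\<close>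
      g_pos[OF that] that by (simp_all add: inverse_eq_divide[symmetric])
  thus "loewner_le (mat (1 / b)) M" "loewner_le M (mat (1 / a))"
    by (simp_all add: M_eq loewner_le_mat_spectral_mat_iff[OF V] loewner_le_spectral_mat_mat_iff[OF V])
qed

section \<open>Loewner bounds for the forward step\<close>

lemma loewner_bounds_one_minus_scaleR:
  fixes S :: "real^'n^'n"
  assumes lo: "loewner_le (mat a) S" and hi: "loewner_le S (mat b)" and "0 \<le> \<eta>"
  shows "loewner_le (mat (1 - \<eta> * b)) (mat 1 - \<eta> *\<^sub>R S)" "loewner_le (mat 1 - \<eta> *\<^sub>R S) (mat (1 - \<eta> * a))"
proof -
  have "sym_mat S" and Sa: "\<And>x. a * (x \<bullet> x) \<le> x \<bullet> (S *v x)" and Sb: "\<And>x. x \<bullet> (S *v x) \<le> b * (x \<bullet> x)"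
    using lo hi by (simp_all add: loewner_le_mat_left_iff loewner_le_mat_right_iff)
  have q: "x \<bullet> ((mat 1 - \<eta> *\<^sub>R S) *v x) = x \<bullet> x - \<eta> * (x \<bullet> (S *v x))" for x
    by (simp add: matrix_vector_mult_diff_rdistrib scaleR_matrix_vector_assoc[symmetric] inner_diff_right)
  have "sym_mat (mat 1 - \<eta> *\<^sub>R S)"
    using \<open>sym_mat S\<close> by (simp add: sym_mat_def transpose_diff transpose_scalar)
  moreover have "(1 - \<eta> * b) * (x \<bullet> x) \<le> x \<bullet> x - \<eta> * (x \<bullet> (S *v x))" for x
    using mult_left_mono[OF Sb \<open>0 \<le> \<eta>\<close>, of x] by (simp add: algebra_simps)
  moreover have "x \<bullet> x - \<eta> * (x \<bullet> (S *v x)) \<le> (1 - \<eta> * a) * (x \<bullet> x)" for x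
    using mult_left_mono[OF Sa \<open>0 \<le> \<eta>\<close>, of x] by (simp add: algebra_simps)
  ultimately show "loewner_le (mat (1 - \<eta> * b)) (mat 1 - \<eta> *\<^sub>R S)" "loewner_le (mat 1 - \<eta> *\<^sub>R S) (mat (1 - \<eta> * a))"
    unfolding loewner_le_mat_left_iff loewner_le_mat_right_iff q by simp_all
qed

lemma norm_mult_vec_loewner_bounds:
  fixes P :: "real^'n^'n"
  assumes lo: "loewner_le (mat a) P" and hi: "loewner_le P (mat b)" and "0 \<le> a"
  shows "a\<^sup>2 * (x \<bullet> x) \<le> (P *v x) \<bullet> (P *v x)" "(P *v x) \<bullet> (P *v x) \<le> b\<^sup>2 * (x \<bullet> x)"
proof -
  obtain V p where V: "onb V" and P_eq: "P = spectral_mat V p"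
    using lo sym_mat_spectral unfolding loewner_le_mat_left_iff by blast
  have p: "a \<le> p v" "p v \<le> b" if "v \<in> V" for v
    using lo hi that by (simp_all add: P_eq loewner_le_mat_spectral_mat_iff[OF V] loewner_le_spectral_mat_mat_iff[OF V])
  have "(P *v x) \<bullet> (P *v x) = x \<bullet> (spectral_mat V (\<lambda>v. (p v)\<^sup>2) *v x)"
    using sym_mat_inner_swap[OF sym_mat_spectral_mat, of x V p "P *v x"]
    by (simp add: P_eq matrix_vector_mul_assoc spectral_mat_mult[OF V] power2_eq_square)
  moreover have "a\<^sup>2 \<le> (p v)\<^sup>2" "(p v)\<^sup>2 \<le> b\<^sup>2" if "v \<in> V" for v
    using p[OF that] \<open>0 \<le> a\<close> by (auto intro: power_mono)
  ultimately show "a\<^sup>2 * (x \<bullet> x) \<le> (P *v x) \<bullet> (P *v x)" "(P *v x) \<bullet> (P *v x) \<le> b\<^sup>2 * (x \<bullet> x)"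
    using spectral_mat_quadratic_ge[OF V] spectral_mat_quadratic_le[OF V] by auto
qed

lemma loewner_bounds_sandwich:
  fixes M P :: "real^'n^'n"
  assumes M: "loewner_le (mat s0) M" "loewner_le M (mat s1)" "0 \<le> s0"
    and P: "loewner_le (mat p0) P" "loewner_le P (mat p1)" "0 \<le> p0"
  shows "loewner_le (mat (s0 * p0\<^sup>2)) (P ** M ** P)" "loewner_le (P ** M ** P) (mat (s1 * p1\<^sup>2))"
proof -
  have sym: "sym_mat M" "sym_mat P" and
    Mq: "\<And>y. s0 * (y \<bullet> y) \<le> y \<bullet> (M *v y)" "\<And>y. y \<bullet> (M *v y) \<le> s1 * (y \<bullet> y)"
    using M P by (simp_all add: loewner_le_mat_left_iff loewner_le_mat_right_iff)
  have "0 \<le> s1" using loewner_le_mat_mat_le[OF M(1,2)] \<open>0 \<le> s0\<close> by simp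
  have q: "x \<bullet> ((P ** M ** P) *v x) = (P *v x) \<bullet> (M *v (P *v x))" for x
    using sym_mat_inner_swap[OF sym(2)] by (simp add: matrix_vector_mul_assoc[symmetric])
  have "s0 * p0\<^sup>2 * (x \<bullet> x) \<le> x \<bullet> ((P ** M ** P) *v x)" for x
  proof -
    have "s0 * p0\<^sup>2 * (x \<bullet> x) \<le> s0 * ((P *v x) \<bullet> (P *v x))"
      using norm_mult_vec_loewner_bounds(1)[OF P] \<open>0 \<le> s0\<close> by (simp add: mult.assoc mult_left_mono)
    thus ?thesis using Mq(1)[of "P *v x"] q by simp
  qed
  moreover have "x \<bullet> ((P ** M ** P) *v x) \<le> s1 * p1\<^sup>2 * (x \<bullet> x)" for x
  proof -
    have "s1 * ((P *v x) \<bullet> (P *v x)) \<le> s1 * p1\<^sup>2 * (x \<bullet> x)"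
      using norm_mult_vec_loewner_bounds(2)[OF P] \<open>0 \<le> s1\<close> by (simp add: mult.assoc mult_left_mono)
    thus ?thesis using Mq(2)[of "P *v x"] q by simp
  qed
  ultimately show "loewner_le (mat (s0 * p0\<^sup>2)) (P ** M ** P)" "loewner_le (P ** M ** P) (mat (s1 * p1\<^sup>2))"
    using sym_mat_sandwich[OF sym(2,1)] by (simp_all add: loewner_le_mat_left_iff loewner_le_mat_right_iff)
qed

section \<open>The proximal step of the negative log-determinant\<close>

definition entropy_prox :: "real \<Rightarrow> real \<Rightarrow> real" where
  "entropy_prox \<eta> l = (l + 2 * \<eta> + sqrt (l * (l + 4 * \<eta>))) / 2"

definition entropy_prox_mat :: "real \<Rightarrow> real^'n^'n \<Rightarrow> real^'n^'n" where
  "entropy_prox_mat \<eta> X = (1/2) *\<^sub>R (X + mat (2 * \<eta>) + psd_sqrt (X ** (X + mat (4 * \<eta>))))"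

lemma entropy_prox_mono:
  assumes "0 \<le> \<eta>" "0 \<le> l" "l \<le> l'"
  shows "entropy_prox \<eta> l \<le> entropy_prox \<eta> l'"
proof -
  have "l * (l + 4 * \<eta>) \<le> l' * (l' + 4 * \<eta>)" using assms by (intro mult_mono) auto
  hence "sqrt (l * (l + 4 * \<eta>)) \<le> sqrt (l' * (l' + 4 * \<eta>))" by (rule real_sqrt_le_mono)
  thus ?thesis unfolding entropy_prox_def using assms(3) by (intro divide_right_mono add_mono) simp_all
qed

text \<open>\<open>entropy_prox \<eta> l\<close> is the larger root \<open>\<sigma>\<close> of \<open>\<sigma>\<^sup>2 - (l + 2\<eta>) \<sigma> + \<eta>\<^sup>2 = 0\<close>, i.e.\ of
  \<open>(\<sigma> - \<eta>)\<^sup>2 / \<sigma> = l\<close>.\<close>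
lemma entropy_prox_inverse:
  assumes "0 \<le> \<eta>" "\<eta> \<le> \<sigma>"
  shows "entropy_prox \<eta> ((\<sigma> - \<eta>)\<^sup>2 / \<sigma>) = \<sigma>"
proof (cases "\<sigma> = 0")
  case False
  hence "0 < \<sigma>" using assms by simp
  define l where "l = (\<sigma> - \<eta>)\<^sup>2 / \<sigma>"
  have "l * (l + 4 * \<eta>) = ((\<sigma>\<^sup>2 - \<eta>\<^sup>2) / \<sigma>)\<^sup>2"
    using \<open>0 < \<sigma>\<close> by (simp add: l_def field_simps power2_eq_square)
  moreover have "0 \<le> (\<sigma>\<^sup>2 - \<eta>\<^sup>2) / \<sigma>"
    using assms \<open>0 < \<sigma>\<close> by (simp add: power_mono)
  ultimately have "sqrt (l * (l + 4 * \<eta>)) = (\<sigma>\<^sup>2 - \<eta>\<^sup>2) / \<sigma>" by (metis real_sqrt_abs abs_of_nonneg)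
  thus ?thesis using \<open>0 < \<sigma>\<close> by (simp add: entropy_prox_def l_def[symmetric]) (simp add: l_def field_simps power2_eq_square)
qed (use assms in \<open>simp add: entropy_prox_def\<close>)

lemma entropy_prox_one_minus_sq_div:
  assumes "0 < \<gamma>" "0 \<le> \<eta>" "\<eta> * \<gamma> \<le> 1"
  shows "entropy_prox \<eta> ((1 - \<eta> * \<gamma>)\<^sup>2 / \<gamma>) = 1 / \<gamma>"
proof -
  have "(1 - \<eta> * \<gamma>)\<^sup>2 / \<gamma> = (1 / \<gamma> - \<eta>)\<^sup>2 / (1 / \<gamma>)" "\<eta> \<le> 1 / \<gamma>"
    using assms by (simp_all add: field_simps power2_eq_square)
  thus ?thesis using entropy_prox_inverse[of \<eta> "1 / \<gamma>"] assms(2) by simp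
qed

lemma entropy_prox_mat_spectral_mat:
  assumes V: "onb V" and l: "\<And>v. v \<in> V \<Longrightarrow> 0 \<le> l v" and "0 \<le> \<eta>"
  shows "entropy_prox_mat \<eta> (spectral_mat V l) = spectral_mat V (\<lambda>v. entropy_prox \<eta> (l v))"
proof -
  define q where "q = (\<lambda>v. l v * (l v + 4 * \<eta>))"
  have q_nonneg: "0 \<le> q v" if "v \<in> V" for v using l[OF that] \<open>0 \<le> \<eta>\<close> by (simp add: q_def)
  have "spectral_mat V l ** (spectral_mat V l + mat (4 * \<eta>)) = spectral_mat V q"
    by (simp add: q_def spectral_mat_const[OF V, symmetric] spectral_mat_add[OF V] spectral_mat_mult[OF V])
  also have "\<dots> = spectral_mat V (\<lambda>v. sqrt (q v)) ** spectral_mat V (\<lambda>v. sqrt (q v))"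
    using q_nonneg by (simp add: spectral_mat_mult[OF V] cong: spectral_mat_cong)
  finally have "psd_sqrt (spectral_mat V l ** (spectral_mat V l + mat (4 * \<eta>))) = spectral_mat V (\<lambda>v. sqrt (q v))"
    using q_nonneg by (intro psd_sqrt_eq) (simp_all add: psd_mat_spectral_mat_iff[OF V])
  thus ?thesis
    by (simp add: entropy_prox_mat_def entropy_prox_def q_def spectral_mat_const[OF V, symmetric]
        spectral_mat_add[OF V] spectral_mat_scaleR[OF V])
qed

lemma entropy_prox_mat_loewner_bounds:
  fixes X :: "real^'n^'n"
  assumes lo: "loewner_le (mat a) X" and hi: "loewner_le X (mat b)" and "0 \<le> a" "0 \<le> \<eta>"
  shows "loewner_le (mat (entropy_prox \<eta> a)) (entropy_prox_mat \<eta> X)"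
    and "loewner_le (entropy_prox_mat \<eta> X) (mat (entropy_prox \<eta> b))"
proof -
  obtain V l where V: "onb V" and X_eq: "X = spectral_mat V l"
    using lo sym_mat_spectral unfolding loewner_le_mat_left_iff by blast
  have l: "a \<le> l v" "l v \<le> b" if "v \<in> V" for v
    using lo hi that by (simp_all add: X_eq loewner_le_mat_spectral_mat_iff[OF V] loewner_le_spectral_mat_mat_iff[OF V])
  have X': "entropy_prox_mat \<eta> X = spectral_mat V (\<lambda>v. entropy_prox \<eta> (l v))"
    unfolding X_eq using l \<open>0 \<le> a\<close> \<open>0 \<le> \<eta>\<close> by (intro entropy_prox_mat_spectral_mat[OF V]) force
  show "loewner_le (mat (entropy_prox \<eta> a)) (entropy_prox_mat \<eta> X)"
    "loewner_le (entropy_prox_mat \<eta> X) (mat (entropy_prox \<eta> b))"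
    unfolding X' loewner_le_mat_spectral_mat_iff[OF V] loewner_le_spectral_mat_mat_iff[OF V]
    using l \<open>0 \<le> a\<close> \<open>0 \<le> \<eta>\<close> by (auto intro: entropy_prox_mono order_trans)
qed

theorem mainTheorem14:
  fixes \<gamma>0 \<gamma>1 \<eta> :: real and \<Sigma> S :: "real^'n^'n"
  assumes "0 < \<gamma>0" and "\<gamma>0 \<le> \<gamma>1"
    and "0 < \<eta>" and "\<eta> \<le> 1 / \<gamma>1"
    and "pd_mat \<Sigma>"
    and "loewner_le (mat \<gamma>0) (matrix_inv \<Sigma>)"
    and "loewner_le (matrix_inv \<Sigma>) (mat \<gamma>1)"
    and "sym_mat S"
    and "loewner_le (mat \<gamma>0) S" and "loewner_le S (mat \<gamma>1)"
  shows "let \<Sigma>' = (mat 1 - \<eta> *\<^sub>R S) ** \<Sigma> ** (mat 1 - \<eta> *\<^sub>R S);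
             \<Sigma>'' = (1/2) *\<^sub>R (\<Sigma>' + mat (2 * \<eta>) + psd_sqrt (\<Sigma>' ** (\<Sigma>' + mat (4 * \<eta>))))
         in loewner_le (mat (1 / \<gamma>1)) \<Sigma>'' \<and> loewner_le \<Sigma>'' (mat (1 / \<gamma>0))"
proof -
  define P where "P = mat 1 - \<eta> *\<^sub>R S"
  have "0 < \<gamma>1" "\<eta> * \<gamma>1 \<le> 1" "\<eta> * \<gamma>0 \<le> 1"
    using assms(1-4) by (auto simp: field_simps intro: order_trans[OF mult_left_mono])
  have \<Sigma>: "loewner_le (mat (1 / \<gamma>1)) \<Sigma>" "loewner_le \<Sigma> (mat (1 / \<gamma>0))"
    using pd_mat_loewner_bounds_of_inverse[OF assms(5,1,6,7)] by auto
  have P: "loewner_le (mat (1 - \<eta> * \<gamma>1)) P" "loewner_le P (mat (1 - \<eta> * \<gamma>0))"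
    unfolding P_def using loewner_bounds_one_minus_scaleR[OF assms(9,10)] assms(3) by auto
  define X where "X = P ** \<Sigma> ** P"
  have X: "loewner_le (mat ((1 - \<eta> * \<gamma>1)\<^sup>2 / \<gamma>1)) X" "loewner_le X (mat ((1 - \<eta> * \<gamma>0)\<^sup>2 / \<gamma>0))"
    using loewner_bounds_sandwich[OF \<Sigma> _ P] \<open>0 < \<gamma>1\<close> \<open>\<eta> * \<gamma>1 \<le> 1\<close> by (simp_all add: X_def)
  have "0 \<le> (1 - \<eta> * \<gamma>1)\<^sup>2 / \<gamma>1" using \<open>0 < \<gamma>1\<close> by simp
  note bounds = entropy_prox_mat_loewner_bounds[OF X this less_imp_le[OF assms(3)]]
  show ?thesis
    using bounds assms(1,3) \<open>0 < \<gamma>1\<close> \<open>\<eta> * \<gamma>1 \<le> 1\<close> \<open>\<eta> * \<gamma>0 \<le> 1\<close>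
    by (simp add: Let_def P_def X_def entropy_prox_mat_def entropy_prox_one_minus_sq_div)
qed

end
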